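(* Let $N=d\ge2$, $w>1$, let $\mathcal{G}$ be the causal graph on $[N]$, $W_Q=W_K=0$ (so $A_{ij}=1/i$ for $j\le i$ and $0$ otherwise), and let $W_V\in\mathbb{R}^{N\times N}$ have $1$ on the diagonal, $w$ on the superdiagonal and $0$ elsewhere. For signs $s_1,\dots,s_N\in\{\pm1\}$ define $X\in\mathbb{R}^{N\times N}$ row by row: $X_{1,:}=s_1e_N$, and for $k\ge2$, $X_{k,j}=-X_{k-1,j+1}/w$ for $1\le j\le N-1$ and $X_{k,N}=s_k\sqrt{1-1/w^2}$. Then each of these $2^N$ matrices is an equilibrium of the LayerNorm dynamics $X\mapsto DAXW_V$ (with $D=\mathrm{diag}(1/\|(AXW_V)_{i,:}\|_2)$), has unit-norm rows and rank $N$, and its stable rank satisfies $$1\le \mathrm{SRank}(X)=\frac{\|X\|_F^2}{\|X\|_2^2}\le\frac{N}{N-(N-1)/w^2}.$$ Consequently, for any $\delta>0$, choosing $w\ge\sqrt{1/\delta+1}$ gives $\mathrm{SRank}(X)\le 1+\delta$.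
   Context: $e_N$ is the $N$-th standard basis row vector of $\mathbb{R}^N$. The causal graph has edges $(j,i)$ for $j\le i$, meaning token $i$ attends to tokens $1,\dots,i$. An equilibrium is a fixed point of the update map. $\|\cdot\|_F$ is the Frobenius norm and $\|\cdot\|_2$ the spectral norm. *)

theory Defs
  imports Complex_Main "Jordan_Normal_Form.DL_Rank"
begin

text \<open>N x N real matrices are represented as functions nat => nat => real,
  with indices ranging over {1..N} (1-based, as in the paper); values outside
  this range are irrelevant.\<close>

type_synonym rmat = "nat \<Rightarrow> nat \<Rightarrow> real"

definition matmul :: "nat \<Rightarrow> rmat \<Rightarrow> rmat \<Rightarrow> rmat" where
  "matmul N P Q = (\<lambda>i j. \<Sum>l=1..N. P i l * Q l j)"

definition causal_attn :: "nat \<Rightarrow> rmat" where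
  "causal_attn N = (\<lambda>i j. if j \<le> i then 1 / real i else 0)"

definition WV :: "real \<Rightarrow> rmat" where
  "WV w = (\<lambda>i j. if j = i then 1 else if j = i + 1 then w else 0)"

definition row_norm :: "nat \<Rightarrow> rmat \<Rightarrow> nat \<Rightarrow> real" where
  "row_norm N M i = sqrt (\<Sum>j=1..N. (M i j)\<^sup>2)"

definition layernorm_update :: "nat \<Rightarrow> rmat \<Rightarrow> rmat \<Rightarrow> rmat \<Rightarrow> rmat" where
  "layernorm_update N A W X =
     (let Y = matmul N (matmul N A X) W in (\<lambda>i j. Y i j / row_norm N Y i))"

definition is_equilibrium :: "nat \<Rightarrow> rmat \<Rightarrow> rmat \<Rightarrow> rmat \<Rightarrow> bool" where
  "is_equilibrium N A W X \<longleftrightarrow>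
     (\<forall>i\<in>{1..N}. \<forall>j\<in>{1..N}. layernorm_update N A W X i j = X i j)"

definition frob_norm :: "nat \<Rightarrow> rmat \<Rightarrow> real" where
  "frob_norm N M = sqrt (\<Sum>i=1..N. \<Sum>j=1..N. (M i j)\<^sup>2)"

definition spec_norm :: "nat \<Rightarrow> rmat \<Rightarrow> real" where
  "spec_norm N M = Sup {sqrt (\<Sum>i=1..N. (\<Sum>j=1..N. M i j * v j)\<^sup>2) | v.
                          (\<Sum>j=1..N. (v j)\<^sup>2) = 1}"

definition stable_rank :: "nat \<Rightarrow> rmat \<Rightarrow> real" where
  "stable_rank N M = (frob_norm N M)\<^sup>2 / (spec_norm N M)\<^sup>2"

definition to_mat :: "nat \<Rightarrow> rmat \<Rightarrow> real mat" where
  "to_mat N M = mat N N (\<lambda>(i, j). M (i + 1) (j + 1))"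

definition mat_rank :: "nat \<Rightarrow> rmat \<Rightarrow> nat" where
  "mat_rank N M = vec_space.rank N (to_mat N M)"

fun Xcons :: "nat \<Rightarrow> real \<Rightarrow> (nat \<Rightarrow> real) \<Rightarrow> nat \<Rightarrow> nat \<Rightarrow> real" where
  "Xcons N w s 0 j = 0"
| "Xcons N w s (Suc 0) j = (if j = N then s 1 else 0)"
| "Xcons N w s (Suc (Suc k)) j =
     (if j = N then s (Suc (Suc k)) * sqrt (1 - 1 / w\<^sup>2)
      else if 1 \<le> j \<and> j \<le> N - 1 then - Xcons N w s (Suc k) (j + 1) / w
      else 0)"

end

theory Submission
  imports Defs "HOL-Analysis.Convex"
begin

text \<open>Each row of X is, up to the factor -1/w, the previous row shifted one step to the left,
  plus a new entry in the last column. Hence multiplying by W_V (which adds w times the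
  left neighbour) turns row l into X_l - X_{l-1}, so the causal average of the rows of
  X W_V telescopes to X_i / i: the LayerNorm update only rescales rows, and the rows of X
  have unit norm by the choice of the last entry. X is lower anti-triangular with
  antidiagonal entries (-1/w)^(k-1) s_1, which gives full rank. Finally ||X||_F^2 = N,
  while ||X||_2 lies between the norm of the last column, sqrt(N - (N-1)/w^2), and ||X||_F.\<close>

lemma Xcons_eq_0_above_antidiag:
  "k + j \<le> N \<Longrightarrow> Xcons N w s k j = 0"
  by (induction N w s k j rule: Xcons.induct) auto

lemma Xcons_antidiag:
  assumes "1 \<le> k" "k \<le> N"
  shows "Xcons N w s k (N + 1 - k) = (- 1 / w) ^ (k - 1) * s 1"
  using assms
proof (induction k rule: less_induct)
  case (less k)
  show ?case
  proof (cases "k = 1")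
    case False
    then obtain k' where k: "k = Suc (Suc k')"
      using less.prems by (metis One_nat_def Suc_le_D not0_implies_Suc)
    have "N + 1 - k + 1 = N - k'" "N + 1 - k \<noteq> N" "1 \<le> N + 1 - k" "N + 1 - k \<le> N - 1"
      using k less.prems by auto
    then show ?thesis
      using less.IH[of "Suc k'"] k less.prems by (simp add: Suc_diff_le)
  qed simp
qed

lemma Xcons_row_sum_squares:
  assumes w: "w \<ge> 1" and s: "\<forall>k\<in>{1..N}. s k = 1 \<or> s k = -1"
    and k: "1 \<le> k" "k \<le> N"
  shows "(\<Sum>j=1..N. (Xcons N w s k j)\<^sup>2) = 1"
  using k
proof (induction k rule: less_induct)
  case (less k)
  have "s k = 1 \<or> s k = -1" using s less.prems by simp
  then have sq: "(s k)\<^sup>2 = 1" by auto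
  show ?case
  proof (cases "k = 1")
    case True
    have "(\<Sum>j=1..N. (Xcons N w s k j)\<^sup>2) = (\<Sum>j=1..N. if j = N then (s k)\<^sup>2 else 0)"
      by (rule sum.cong) (use True in auto)
    then show ?thesis using sq less.prems by simp
  next
    case False
    then obtain k' where k: "k = Suc (Suc k')"
      using less.prems by (metis One_nat_def Suc_le_D not0_implies_Suc)
    define g where "g j = (Xcons N w s (Suc k') j)\<^sup>2" for j
    have IH: "(\<Sum>j=1..N. g j) = 1"
      using less.IH[of "Suc k'"] k less.prems by (simp add: g_def)
    have "{1..N} = insert N {1..N-1}" using less.prems k by auto
    then have "(\<Sum>j=1..N. (Xcons N w s k j)\<^sup>2)
        = (Xcons N w s k N)\<^sup>2 + (\<Sum>j=1..N-1. (Xcons N w s k j)\<^sup>2)"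
      using less.prems by (simp only:) (subst sum.insert; auto)
    also have "(\<Sum>j=1..N-1. (Xcons N w s k j)\<^sup>2) = (\<Sum>j=1..N-1. g (Suc j) / w\<^sup>2)"
      by (rule sum.cong) (auto simp: k g_def power_divide)
    also have "\<dots> = (\<Sum>j=1..N-1. g (Suc j)) / w\<^sup>2"
      by (simp add: sum_divide_distrib)
    also have "(\<Sum>j=1..N-1. g (Suc j)) = (\<Sum>j=1..N. g j) - g 1"
      using sum.atLeast_Suc_atMost[of 1 N g] sum.shift_bounds_cl_Suc_ivl[of g 1 "N - 1"]
        less.prems k by simp
    also have "g 1 = 0"
      unfolding g_def using Xcons_eq_0_above_antidiag[of "Suc k'" 1 N w s] less.prems k by simp
    also have "(Xcons N w s k N)\<^sup>2 = (s k)\<^sup>2 * (1 - 1 / w\<^sup>2)"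
      using k w by (simp add: power_mult_distrib)
    finally show ?thesis using IH sq w by simp
  qed
qed

lemma Xcons_last_column_sum_squares:
  assumes N: "N \<ge> 1" and w: "w \<ge> 1" and s: "\<forall>k\<in>{1..N}. s k = 1 \<or> s k = -1"
  shows "(\<Sum>i=1..N. (Xcons N w s i N)\<^sup>2) = real N - (real N - 1) / w\<^sup>2"
proof -
  have "(Xcons N w s i N)\<^sup>2 = 1 - 1 / w\<^sup>2" if i: "i \<in> {2..N}" for i
  proof -
    obtain k where k: "i = Suc (Suc k)"
      using i by (metis atLeastAtMost_iff add_2_eq_Suc le_Suc_ex)
    have "s i = 1 \<or> s i = -1" using s i by simp
    then have "(s i)\<^sup>2 = 1" by auto
    then show ?thesis using w by (simp add: k power_mult_distrib)
  qed
  moreover have "s 1 = 1 \<or> s 1 = -1" using s N by simp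
  then have "(Xcons N w s 1 N)\<^sup>2 = 1" by auto
  moreover have "{1..N} = insert 1 {2..N}" using N by auto
  ultimately have "(\<Sum>i=1..N. (Xcons N w s i N)\<^sup>2) = 1 + real (N - 1) * (1 - 1 / w\<^sup>2)"
    by simp
  then show ?thesis using N by (simp add: of_nat_diff algebra_simps)
qed

lemma matmul_assoc: "matmul N (matmul N P Q) R = matmul N P (matmul N Q R)"
  unfolding matmul_def
  by (auto simp: sum_distrib_left sum_distrib_right mult.assoc intro!: ext sum.swap[THEN trans])

lemma matmul_WV:
  assumes "1 \<le> j" "j \<le> N"
  shows "matmul N M (WV w) l j = M l j + (if 2 \<le> j then w * M l (j - 1) else 0)"
proof -
  have "matmul N M (WV w) l j
      = (\<Sum>m=1..N. (if m = j then M l m else 0) + (if 2 \<le> j \<and> m = j - 1 then w * M l m else 0))"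
    unfolding matmul_def WV_def by (rule sum.cong) auto
  then show ?thesis using assms by (auto simp: sum.distrib)
qed

lemma Xcons_mult_WV:
  assumes "w \<noteq> 0" "1 \<le> l" "l \<le> N" "1 \<le> j" "j \<le> N"
  shows "matmul N (Xcons N w s) (WV w) l j = Xcons N w s l j - Xcons N w s (l - 1) j"
proof (cases "l = 1")
  case False
  then obtain k where l: "l = Suc (Suc k)"
    using assms by (metis One_nat_def Suc_le_D not0_implies_Suc)
  show ?thesis
  proof (cases "2 \<le> j")
    case True
    then have "Xcons N w s l (j - 1) = - Xcons N w s (Suc k) j / w"
      using l assms by auto
    then show ?thesis using assms True l by (simp add: matmul_WV)
  next
    case False
    then have "j = 1" using assms by simp
    then show ?thesis
      using Xcons_eq_0_above_antidiag[of "Suc k" j N w s] assms False l by (simp add: matmul_WV)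
  qed
qed (use assms in \<open>auto simp: matmul_WV\<close>)

lemma causal_attn_Xcons_WV:
  assumes "w \<noteq> 0" "1 \<le> i" "i \<le> N" "1 \<le> j" "j \<le> N"
  shows "matmul N (matmul N (causal_attn N) (Xcons N w s)) (WV w) i j = Xcons N w s i j / real i"
proof -
  let ?Z = "matmul N (Xcons N w s) (WV w)"
  have telescope: "k \<le> N \<Longrightarrow> (\<Sum>l=1..k. ?Z l j) = Xcons N w s k j" for k
    by (induction k) (use assms Xcons_mult_WV in auto)
  have "matmul N (matmul N (causal_attn N) (Xcons N w s)) (WV w) i j
      = (\<Sum>l=1..N. causal_attn N i l * ?Z l j)"
    by (simp only: matmul_assoc) (simp add: matmul_def)
  also have "\<dots> = (\<Sum>l=1..i. causal_attn N i l * ?Z l j)"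
    using assms by (intro sum.mono_neutral_right) (auto simp: causal_attn_def)
  also have "\<dots> = (\<Sum>l=1..i. ?Z l j) / real i"
    by (simp add: causal_attn_def sum_divide_distrib)
  finally show ?thesis using telescope assms by simp
qed

lemma is_equilibrium_if_rows_rescaled:
  assumes rows: "\<forall>i\<in>{1..N}. row_norm N X i = 1"
    and scaled: "\<And>i j. i \<in> {1..N} \<Longrightarrow> j \<in> {1..N} \<Longrightarrow> matmul N (matmul N A X) W i j = X i j / c i"
    and c: "\<And>i. i \<in> {1..N} \<Longrightarrow> c i > 0"
  shows "is_equilibrium N A W X"
  unfolding is_equilibrium_def
proof (intro ballI)
  fix i j assume i: "i \<in> {1..N}" and j: "j \<in> {1..N}"
  let ?Y = "matmul N (matmul N A X) W"
  have "row_norm N ?Y i = sqrt ((\<Sum>j'=1..N. (X i j')\<^sup>2) / (c i)\<^sup>2)"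
    unfolding row_norm_def using scaled[OF i]
    by (simp add: power_divide sum_divide_distrib)
  also have "\<dots> = row_norm N X i / c i"
    using c[OF i] by (simp add: row_norm_def real_sqrt_divide)
  finally have "row_norm N ?Y i = 1 / c i" using rows i by simp
  then show "layernorm_update N A W X i j = X i j"
    unfolding layernorm_update_def Let_def using scaled[OF i j] c[OF i] by simp
qed

definition flip_mat :: "nat \<Rightarrow> real mat" where
  "flip_mat N = mat N N (\<lambda>(i, j). if i + j = N - 1 then 1 else 0)"

lemma flip_mat_carrier: "flip_mat N \<in> carrier_mat N N"
  by (simp add: flip_mat_def)

lemma to_mat_mult_flip_mat:
  assumes "i < N" "k < N"
  shows "(to_mat N M * flip_mat N) $$ (i, k) = M (i + 1) (N - k)"
proof -
  have "(to_mat N M * flip_mat N) $$ (i, k)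
      = (\<Sum>j\<in>{0..<N}. M (i + 1) (j + 1) * (if j + k = N - 1 then 1 else 0))"
    using assms by (simp add: to_mat_def flip_mat_def scalar_prod_def)
  also have "\<dots> = (\<Sum>j\<in>{0..<N}. if j = N - 1 - k then M (i + 1) (j + 1) else 0)"
    using assms by (intro sum.cong) auto
  finally show ?thesis using assms by (simp add: Suc_diff_Suc)
qed

lemma mat_rank_Xcons:
  assumes "N \<ge> 1" "w \<noteq> 0" "s 1 \<noteq> 0"
  shows "mat_rank N (Xcons N w s) = N"
proof -
  let ?A = "to_mat N (Xcons N w s)"
  let ?B = "?A * flip_mat N"
  have A: "?A \<in> carrier_mat N N" by (simp add: to_mat_def)
  have B: "?B \<in> carrier_mat N N" using A flip_mat_carrier by simp
  have "?B $$ (i, k) = 0" if "i < k" "k < N" for i k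
    using to_mat_mult_flip_mat[of i N k] that Xcons_eq_0_above_antidiag[of "i + 1" "N - k" N w s]
    by simp
  then have "det ?B = prod_list (diag_mat ?B)"
    using det_lower_triangular B by blast
  moreover have "x \<noteq> 0" if x: "x \<in> set (diag_mat ?B)" for x
  proof -
    obtain i where i: "i < N" "x = ?B $$ (i, i)" using x B by (auto simp: diag_mat_def)
    then have "x = (- 1 / w) ^ i * s 1"
      using to_mat_mult_flip_mat[of i N i] Xcons_antidiag[of "i + 1" N w s] by simp
    then show ?thesis using assms by simp
  qed
  ultimately have "det ?B \<noteq> 0" by (auto simp: prod_list_zero_iff)
  then have "det ?A \<noteq> 0"
    using det_mult[OF A flip_mat_carrier] by simp
  then show ?thesis unfolding mat_rank_def using vec_space.det_rank_iff[OF A] by simp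
qed

lemma image_norm_le_frob_norm:
  assumes "(\<Sum>j=1..N. (v j)\<^sup>2) = 1"
  shows "sqrt (\<Sum>i=1..N. (\<Sum>j=1..N. M i j * v j)\<^sup>2) \<le> frob_norm N M"
proof -
  have "(\<Sum>j=1..N. M i j * v j)\<^sup>2 \<le> (\<Sum>j=1..N. (M i j)\<^sup>2)" for i
    using Cauchy_Schwarz_ineq_sum[of "M i" v "{1..N}"] assms by simp
  then show ?thesis unfolding frob_norm_def by (intro real_sqrt_le_mono sum_mono)
qed

lemma unit_vector_sum_squares:
  fixes j N :: nat
  assumes "j \<in> {1..N}"
  shows "(\<Sum>l=1..N. (if l = j then 1 else 0 :: real)\<^sup>2) = 1"
proof -
  have "(\<Sum>l=1..N. (if l = j then 1 else 0 :: real)\<^sup>2) = (\<Sum>l=1..N. if l = j then 1 else 0)"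
    by (intro sum.cong) auto
  then show ?thesis using assms by simp
qed

lemma spec_norm_le_frob_norm:
  assumes "N \<ge> 1"
  shows "spec_norm N M \<le> frob_norm N M"
  unfolding spec_norm_def
proof (rule cSup_least)
  show "{sqrt (\<Sum>i=1..N. (\<Sum>j=1..N. M i j * v j)\<^sup>2) | v. (\<Sum>j=1..N. (v j)\<^sup>2) = 1} \<noteq> {}"
    using unit_vector_sum_squares[of 1 N] assms by auto
qed (use image_norm_le_frob_norm in blast)

lemma column_norm_le_spec_norm:
  assumes "j \<in> {1..N}"
  shows "sqrt (\<Sum>i=1..N. (M i j)\<^sup>2) \<le> spec_norm N M"
proof -
  let ?e = "\<lambda>l. if l = j then 1 else 0 :: real"
  have "(\<Sum>l=1..N. M i l * ?e l) = M i j" for i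
    using assms by (simp add: if_distrib cong: if_cong)
  then have "sqrt (\<Sum>i=1..N. (M i j)\<^sup>2)
      \<in> {sqrt (\<Sum>i=1..N. (\<Sum>j=1..N. M i j * v j)\<^sup>2) | v. (\<Sum>j=1..N. (v j)\<^sup>2) = 1}"
    using unit_vector_sum_squares[OF assms] unfolding mem_Collect_eq by (intro exI[of _ ?e]) simp
  moreover have "bdd_above {sqrt (\<Sum>i=1..N. (\<Sum>j=1..N. M i j * v j)\<^sup>2) | v.
      (\<Sum>j=1..N. (v j)\<^sup>2) = 1}"
    using image_norm_le_frob_norm by (intro bdd_aboveI[of _ "frob_norm N M"]) blast
  ultimately show ?thesis unfolding spec_norm_def by (rule cSup_upper)
qed

lemma stable_rank_bounds:
  assumes "j \<in> {1..N}" and col: "(\<Sum>i=1..N. (M i j)\<^sup>2) > 0"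
  shows "1 \<le> stable_rank N M"
    and "stable_rank N M \<le> (frob_norm N M)\<^sup>2 / (\<Sum>i=1..N. (M i j)\<^sup>2)"
proof -
  have lo: "sqrt (\<Sum>i=1..N. (M i j)\<^sup>2) \<le> spec_norm N M"
    using column_norm_le_spec_norm[OF assms(1)] .
  then have pos: "spec_norm N M > 0" using col by (meson less_le_trans real_sqrt_gt_0_iff)
  have "spec_norm N M \<le> frob_norm N M"
    using spec_norm_le_frob_norm assms(1) by simp
  then show "1 \<le> stable_rank N M"
    unfolding stable_rank_def using pos by (simp add: power_mono)
  have "(\<Sum>i=1..N. (M i j)\<^sup>2) \<le> (spec_norm N M)\<^sup>2"
    using power_mono[OF lo, of 2] col by simp
  then show "stable_rank N M \<le> (frob_norm N M)\<^sup>2 / (\<Sum>i=1..N. (M i j)\<^sup>2)"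
    unfolding stable_rank_def using col pos by (intro divide_left_mono) auto
qed

lemma frob_norm_sq_of_unit_rows:
  assumes "\<forall>i\<in>{1..N}. row_norm N M i = 1"
  shows "(frob_norm N M)\<^sup>2 = real N"
proof -
  have "(\<Sum>j=1..N. (M i j)\<^sup>2) = 1" if "i \<in> {1..N}" for i
    using assms that unfolding row_norm_def by (metis real_sqrt_eq_1_iff)
  then show ?thesis unfolding frob_norm_def by (simp add: sum_nonneg)
qed

lemma ratio_le_one_plus_delta:
  fixes N :: nat and w \<delta> :: real
  assumes N: "N \<ge> 1" and \<delta>: "\<delta> > 0" and w: "w \<ge> sqrt (1 / \<delta> + 1)"
  shows "real N / (real N - (real N - 1) / w\<^sup>2) \<le> 1 + \<delta>"
proof -
  have w2: "1 / \<delta> + 1 \<le> w\<^sup>2"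
    using power_mono[OF w, of 2] \<delta> by (simp add: add_pos_pos)
  have "1 / \<delta> + 1 > 0" using \<delta> by (simp add: add_pos_pos)
  then have "1 / w\<^sup>2 \<le> 1 / (1 / \<delta> + 1)"
    using w2 by (intro divide_left_mono mult_pos_pos) auto
  also have "\<dots> = \<delta> / (1 + \<delta>)"
    using \<delta> by (simp add: field_simps)
  finally have inv: "(1 + \<delta>) * (1 / w\<^sup>2) \<le> \<delta>"
    using \<delta> by (simp add: field_simps)
  have N1: "real N - 1 \<ge> 0" using N by simp
  have "(1 + \<delta>) * ((real N - 1) / w\<^sup>2) = (real N - 1) * ((1 + \<delta>) * (1 / w\<^sup>2))"
    by simp
  also have "\<dots> \<le> (real N - 1) * \<delta>"
    using inv N1 by (rule mult_left_mono)
  finally have key: "(1 + \<delta>) * ((real N - 1) / w\<^sup>2) \<le> (real N - 1) * \<delta>" .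
  have "(real N - 1) / w\<^sup>2 \<le> (real N - 1) * \<delta> / (1 + \<delta>)"
    using key \<delta> by (simp add: field_simps)
  also have "\<dots> < real N"
    using N \<delta> by (simp add: field_simps)
  finally have pos: "real N - (real N - 1) / w\<^sup>2 > 0" by simp
  have "(1 + \<delta>) * (real N - (real N - 1) / w\<^sup>2)
      = real N + (\<delta> * real N - (1 + \<delta>) * ((real N - 1) / w\<^sup>2))"
    by (simp only: right_diff_distrib distrib_right)
  also have "\<dots> \<ge> real N"
    using key \<delta> by (simp add: algebra_simps)
  finally show ?thesis
    using pos by (simp add: divide_le_eq mult.commute)
qed

theorem mainTheorem14:
  fixes N :: nat and w :: real and s :: "nat \<Rightarrow> real"
  assumes N: "N \<ge> 2"
    and w: "w > 1"
    and s: "\<forall>k\<in>{1..N}. s k = 1 \<or> s k = -1"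
  defines "X \<equiv> Xcons N w s"
  shows "is_equilibrium N (causal_attn N) (WV w) X
       \<and> (\<forall>i\<in>{1..N}. row_norm N X i = 1)
       \<and> mat_rank N X = N
       \<and> 1 \<le> stable_rank N X
       \<and> stable_rank N X \<le> real N / (real N - (real N - 1) / w\<^sup>2)
       \<and> (\<forall>\<delta>>0. w \<ge> sqrt (1 / \<delta> + 1) \<longrightarrow> stable_rank N X \<le> 1 + \<delta>)"
proof -
  have rows: "\<forall>i\<in>{1..N}. row_norm N X i = 1"
    using Xcons_row_sum_squares[OF _ s] w by (simp add: X_def row_norm_def)
  have equilibrium: "is_equilibrium N (causal_attn N) (WV w) X"
    using rows causal_attn_Xcons_WV[of w] w
    by (intro is_equilibrium_if_rows_rescaled[where c = real]) (auto simp: X_def)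
  have "s 1 \<noteq> 0" using s N by force
  then have rank: "mat_rank N X = N"
    using mat_rank_Xcons[of N w s] N w by (simp add: X_def)
  have col: "(\<Sum>i=1..N. (X i N)\<^sup>2) = real N - (real N - 1) / w\<^sup>2"
    using Xcons_last_column_sum_squares[of N w s] N w s by (simp add: X_def)
  have "(real N - 1) / w\<^sup>2 \<le> (real N - 1) / 1"
    using w N by (intro divide_left_mono) (auto simp: less_1_mult)
  then have "(\<Sum>i=1..N. (X i N)\<^sup>2) > 0" using col by simp
  then have sr: "1 \<le> stable_rank N X" "stable_rank N X \<le> real N / (real N - (real N - 1) / w\<^sup>2)"
    using stable_rank_bounds[of N N X] frob_norm_sq_of_unit_rows[OF rows] col N by auto
  have "stable_rank N X \<le> 1 + \<delta>" if "\<delta> > 0" "w \<ge> sqrt (1 / \<delta> + 1)" for \<delta>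
    using order_trans[OF sr(2) ratio_le_one_plus_delta[OF _ that]] N by simp
  then show ?thesis using equilibrium rows rank sr by blast
qed

end
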